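(* Let $N\ge1$, $1\le n\le N$, and let $x,y$ and $x_1,\dots,x_N$ be integers with $0\le x_1\le\cdots\le x_N\le x+y$, $x_n=x$; set $y_n=y$. Let $R>0$ and let $F$ be analytic on $\{|w|\ge R\}$ with $|F(w)|\to0$ uniformly as $|w|\to\infty$. Then $$\sum_{y_N=0}^{x+y-x_N}\sum_{y_{N-1}=y_N}^{x+y-x_{N-1}}\cdots\sum_{y_{n+1}=y_{n+2}}^{x+y-x_{n+1}}\ \sum_{y_{n-1}=y}^{x+y-x_{n-1}}\cdots\sum_{y_1=y_2}^{x+y-x_1}\det\Big[\int_{|w|=R}(w+1)^{y_j}w^{-j+i}F(w)\frac{dw}{2\pi i}\Big]_{i,j=1}^N$$ $$=\det\Big[\int_{|w|=R}(w+1)^{x+y-x_j+\mathbf 1_{j\ne n}}w^{-j+i-\mathbf 1_{j\ne n}}F(w)\frac{dw}{2\pi i}\Big]_{i,j=1}^N.$$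
   Context: The circle $|w|=R$ is oriented counterclockwise. In the nested sum, $y_{n+1}$ is summed from $y_{n+2}$ (read as $y_{N+1}=0$ when $n+1=N$... more precisely, the summation range of $y_j$ for $j>n$ starts at $y_{j+1}$ with the convention that the sum over $y_N$ starts at $0$) and for $j<n$ the sum over $y_j$ starts at $y_{j+1}$, where $y_n=y$ is fixed; the upper limit for $y_j$ is $x+y-x_j$. $\mathbf 1_{j\ne n}$ is $1$ if $j\ne n$ and $0$ otherwise. *)

theory Defs
  imports "HOL-Complex_Analysis.Complex_Analysis" "Jordan_Normal_Form.Determinant"
begin

definition circ_int :: "real \<Rightarrow> (complex \<Rightarrow> complex) \<Rightarrow> complex" where
  "circ_int R f = contour_integral (circlepath 0 R) f / (2 * of_real pi * \<i>)"

text \<open>Index set of the nested sum: tuples (y_1,...,y_N) (stored as functions on nat,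
  zero outside 1..N, so that y_(N+1) = 0) with y_n = y and, for every j in 1..N with
  j different from n, y_(j+1) <= y_j <= x + y - x_j.\<close>
definition sum_range :: "nat \<Rightarrow> nat \<Rightarrow> (nat \<Rightarrow> int) \<Rightarrow> int \<Rightarrow> int \<Rightarrow> (nat \<Rightarrow> int) set" where
  "sum_range N n xs x y = {ys. ys n = y \<and> (\<forall>j. j \<notin> {1..N} \<longrightarrow> ys j = 0) \<and>
      (\<forall>j\<in>{1..N} - {n}. ys (Suc j) \<le> ys j \<and> ys j \<le> x + y - xs j)}"

end

theory Submission
  imports Defs
begin

(* Summing column j over y_j from y_(j+1) to U_j = x + y - x_j telescopes, because
   w * (sum of (w+1)^a for a = b..U) = (w+1)^(U+1) - (w+1)^b: the column becomes
   (w+1)^(U_j + 1) w^(i-j-1) minus the column (w+1)^(y_(j+1)) w^(i-(j+1)). Performing the sums from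
   the innermost (smallest j) outwards, the subtracted column equals column j+1, which has not been
   summed yet, so by multilinearity it contributes a determinant with two equal columns; for j = N
   it is w^(i-N-1) F(w) instead, whose integral vanishes since F tends to 0 at infinity. *)

lemma contour_integral_circlepath_exterior_eq:
  assumes f: "f analytic_on {w. R \<le> cmod w}" and "0 < R" "R \<le> r"
  shows "contour_integral (circlepath 0 R) f = contour_integral (circlepath 0 r) f"
proof -
  obtain T where T: "open T" "{w. R \<le> cmod w} \<subseteq> T" "f holomorphic_on T"
    using f analytic_on_holomorphic by blast
  have "closed_segment (circlepath 0 R t) (circlepath 0 r t) \<subseteq> {w. R \<le> cmod w}" for t
  proof
    fix z assume "z \<in> closed_segment (circlepath 0 R t) (circlepath 0 r t)"
    then obtain u where u: "0 \<le> u" "u \<le> 1"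
      and z: "z = of_real ((1 - u) * R + u * r) * exp (2 * of_real pi * \<i> * of_real t)"
      unfolding closed_segment_def circlepath by (auto simp: scaleR_conv_of_real algebra_simps)
    define s where "s = (1 - u) * R + u * r"
    have "R \<le> s"
      using u \<open>R \<le> r\<close> mult_left_mono[of R r u] by (simp add: s_def algebra_simps)
    moreover have "cmod z = \<bar>s\<bar>"
      unfolding z s_def[symmetric] by (simp add: norm_mult norm_exp_eq_Re)
    ultimately show "z \<in> {w. R \<le> cmod w}"
      using \<open>0 < R\<close> by simp
  qed
  then have "homotopic_loops T (circlepath 0 R) (circlepath 0 r)"
    using T(2) by (intro homotopic_loops_linear) auto
  then show ?thesis
    using Cauchy_theorem_homotopic_loops T(1,3) by simp
qed

lemma contour_integral_circlepath_eq_0_at_infinity: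
  assumes f: "f analytic_on {w. R \<le> cmod w}" and "0 < R"
    and lim: "((\<lambda>w. w * f w) \<longlongrightarrow> 0) at_infinity"
  shows "contour_integral (circlepath 0 R) f = 0"
proof -
  let ?I = "contour_integral (circlepath 0 R) f"
  have bound: "norm ?I \<le> 2 * pi * e" if "e > 0" for e
  proof -
    obtain b where b: "\<And>w. b \<le> norm w \<Longrightarrow> norm (w * f w) < e"
      using lim \<open>e > 0\<close> unfolding tendsto_iff eventually_at_infinity by force
    define r where "r = max R b"
    have r: "R \<le> r" "b \<le> r" "0 < r"
      using \<open>0 < R\<close> unfolding r_def by auto
    have "continuous_on (sphere 0 r) f"
      using holomorphic_on_imp_continuous_on[OF analytic_imp_holomorphic[OF f]]
      by (rule continuous_on_subset) (use r in auto)
    then have "(f has_contour_integral ?I) (circlepath 0 r)"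
      unfolding contour_integral_circlepath_exterior_eq[OF f \<open>0 < R\<close> r(1)]
      using r by (intro has_contour_integral_integral contour_integrable_continuous_circlepath) auto
    then have "norm ?I \<le> e / r * (2 * pi * r)"
    proof (rule has_contour_integral_bound_circlepath)
      fix w :: complex assume "norm (w - 0) = r"
      then show "norm (f w) \<le> e / r"
        using b[of w] r by (simp add: norm_mult field_simps)
    qed (use \<open>e > 0\<close> r in auto)
    then show ?thesis using r by (simp add: mult.commute)
  qed
  have "norm ?I \<le> 0 + e" if "e > 0" for e
    using bound[of "e / (2 * pi)"] that by simp
  then show ?thesis
    using field_le_epsilon[of "norm ?I" 0] by simp
qed

lemma geometric_sum_power_int:
  fixes w :: "'a::field"
  assumes "0 \<le> b" "b \<le> c + 1"
  shows "w * (\<Sum>a\<in>{b..c}. (w + 1) powi a) = (w + 1) powi (c + 1) - (w + 1) powi b"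
proof -
  have "b - 1 \<le> c" using assms(2) by simp
  then show ?thesis
  proof (induction c rule: int_ge_induct)
    case base
    then show ?case by simp
  next
    case (step c)
    have "{b..c + 1} = insert (c + 1) {b..c}" using step.hyps by auto
    moreover have "(w + 1) powi (c + 1 + 1) = (w + 1) * (w + 1) powi (c + 1)"
      using step.hyps assms(1) by (subst power_int_add) auto
    ultimately show ?case
      using step.IH by (simp add: distrib_left algebra_simps)
  qed
qed

lemma circ_int_sum_telescope:
  assumes F: "continuous_on (sphere 0 R) F" and "0 < R" "0 \<le> b" "b \<le> c + 1"
  shows "(\<Sum>a\<in>{b..c}. circ_int R (\<lambda>w. (w + 1) powi a * w powi k * F w))
       = circ_int R (\<lambda>w. (w + 1) powi (c + 1) * w powi (k - 1) * F w)
         - circ_int R (\<lambda>w. (w + 1) powi b * w powi (k - 1) * F w)"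
proof -
  have integrable: "(\<lambda>w. (w + 1) powi a * w powi l * F w) contour_integrable_on circlepath 0 R"
    if "0 \<le> a" for a l
    using \<open>0 < R\<close> that
    by (intro contour_integrable_continuous_circlepath continuous_intros) (auto intro: F)
  have "contour_integral (circlepath 0 R) (\<lambda>w. \<Sum>a\<in>{b..c}. (w + 1) powi a * w powi k * F w)
      = contour_integral (circlepath 0 R)
          (\<lambda>w. (w + 1) powi (c + 1) * w powi (k - 1) * F w - (w + 1) powi b * w powi (k - 1) * F w)"
  proof (rule contour_integral_eq)
    fix w :: complex assume "w \<in> path_image (circlepath 0 R)"
    then have "w powi k = w * w powi (k - 1)"
      using \<open>0 < R\<close> by (subst power_int_diff) auto
    then have "(\<Sum>a\<in>{b..c}. (w + 1) powi a * w powi k * F w)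
        = w * (\<Sum>a\<in>{b..c}. (w + 1) powi a) * w powi (k - 1) * F w"
      by (simp add: sum_distrib_left sum_distrib_right algebra_simps)
    also have "\<dots> = ((w + 1) powi (c + 1) - (w + 1) powi b) * w powi (k - 1) * F w"
      using geometric_sum_power_int[OF \<open>0 \<le> b\<close> \<open>b \<le> c + 1\<close>, of w] by simp
    finally show "(\<Sum>a\<in>{b..c}. (w + 1) powi a * w powi k * F w)
        = (w + 1) powi (c + 1) * w powi (k - 1) * F w - (w + 1) powi b * w powi (k - 1) * F w"
      by (simp add: algebra_simps)
  qed
  moreover have "contour_integral (circlepath 0 R) (\<lambda>w. \<Sum>a\<in>{b..c}. (w + 1) powi a * w powi k * F w)
      = (\<Sum>a\<in>{b..c}. contour_integral (circlepath 0 R) (\<lambda>w. (w + 1) powi a * w powi k * F w))"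
    using integrable \<open>0 \<le> b\<close> by (intro contour_integral_sum) auto
  moreover have "contour_integral (circlepath 0 R)
          (\<lambda>w. (w + 1) powi (c + 1) * w powi (k - 1) * F w - (w + 1) powi b * w powi (k - 1) * F w)
      = contour_integral (circlepath 0 R) (\<lambda>w. (w + 1) powi (c + 1) * w powi (k - 1) * F w)
        - contour_integral (circlepath 0 R) (\<lambda>w. (w + 1) powi b * w powi (k - 1) * F w)"
    using integrable \<open>0 \<le> b\<close> \<open>b \<le> c + 1\<close> by (intro contour_integral_diff) auto
  ultimately show ?thesis
    unfolding circ_int_def by (simp flip: sum_divide_distrib diff_divide_distrib)
qed

lemma circ_int_power_int_eq_0:
  assumes F: "F analytic_on {w. R \<le> cmod w}" and "0 < R"
    and lim: "(F \<longlongrightarrow> 0) at_infinity" and "k < 0"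
  shows "circ_int R (\<lambda>w. w powi k * F w) = 0"
proof -
  have "((\<lambda>w. w * (w powi k * F w)) \<longlongrightarrow> 0) at_infinity"
  proof (rule Lim_null_comparison)
    have "norm (w * (w powi k * F w)) \<le> norm (F w)" if "1 \<le> norm w" for w :: complex
    proof -
      have "norm w powi (k + 1) \<le> norm w powi 0"
        using that \<open>k < 0\<close> by (intro power_int_increasing) auto
      moreover have "w * w powi k = w powi (k + 1)"
        using that by (subst power_int_add_1') auto
      ultimately show ?thesis
        by (simp add: mult.assoc[symmetric] norm_mult norm_power_int mult_left_le_one_le)
    qed
    then show "\<forall>\<^sub>F w in at_infinity. norm (w * (w powi k * F w)) \<le> norm (F w)"
      unfolding eventually_at_infinity by blast
    show "((\<lambda>w. norm (F w)) \<longlongrightarrow> 0) at_infinity"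
      using tendsto_norm_zero[OF lim] .
  qed
  then have "contour_integral (circlepath 0 R) (\<lambda>w. w powi k * F w) = 0"
    using \<open>0 < R\<close> by (intro contour_integral_circlepath_eq_0_at_infinity analytic_intros F) auto
  then show ?thesis unfolding circ_int_def by simp
qed

definition nested_range :: "nat set \<Rightarrow> (nat \<Rightarrow> int) \<Rightarrow> (nat \<Rightarrow> int) \<Rightarrow> (nat \<Rightarrow> int) set" where
  "nested_range I g U =
     {ys. (\<forall>j. j \<notin> I \<longrightarrow> ys j = g j) \<and> (\<forall>j\<in>I. ys (Suc j) \<le> ys j \<and> ys j \<le> U j)}"

lemma nested_range_empty [simp]: "nested_range {} g U = {g}"
  unfolding nested_range_def by auto

lemma nested_range_nonneg:
  assumes "finite I" "\<And>j. 0 \<le> g j" and ys: "ys \<in> nested_range I g U"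
  shows "0 \<le> ys j"
proof -
  obtain b where "I \<subseteq> {..<b}"
    using \<open>finite I\<close> finite_nat_bounded by blast
  then have "j + b \<notin> I" by auto
  then have "\<exists>k. j + k \<notin> I" ..
  define k where "k = (LEAST k. j + k \<notin> I)"
  have k: "j + k \<notin> I" "{j..<j + k} \<subseteq> I"
  proof -
    show "j + k \<notin> I"
      unfolding k_def by (rule LeastI_ex) fact
    show "{j..<j + k} \<subseteq> I"
    proof
      fix i assume "i \<in> {j..<j + k}"
      then have "j + (i - j) \<in> I"
        using not_less_Least[of "i - j" "\<lambda>k. j + k \<notin> I"] unfolding k_def by auto
      then show "i \<in> I"
        using \<open>i \<in> {j..<j + k}\<close> by simp
    qed
  qed
  have "ys (j + k) \<le> ys j"
  proof (rule lift_Suc_antimono_le_ivl[where N = I])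
    show "ys (Suc i) \<le> ys i" if "i \<in> I" for i
      using ys that unfolding nested_range_def by blast
  qed (use k(2) in auto)
  moreover have "ys (j + k) = g (j + k)"
    using ys k(1) unfolding nested_range_def by auto
  ultimately show ?thesis
    using assms(2)[of "j + k"] by simp
qed

lemma finite_nested_range:
  assumes "finite I" "\<And>j. 0 \<le> g j"
  shows "finite (nested_range I g U)"
proof -
  let ?B = "\<Union>j\<in>I. {0..U j}"
  let ?extend = "\<lambda>f j. if j \<in> I then f j else g j"
  have "nested_range I g U \<subseteq> ?extend ` {f. \<forall>j. (j \<in> I \<longrightarrow> f j \<in> ?B) \<and> (j \<notin> I \<longrightarrow> f j = 0)}"
  proof
    fix ys assume ys: "ys \<in> nested_range I g U"
    then have "ys = ?extend (\<lambda>j. if j \<in> I then ys j else 0)"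
      unfolding nested_range_def by auto
    moreover have "ys j \<in> {0..U j}" if "j \<in> I" for j
      using ys that nested_range_nonneg[OF assms ys] unfolding nested_range_def by auto
    ultimately show "ys \<in> ?extend ` {f. \<forall>j. (j \<in> I \<longrightarrow> f j \<in> ?B) \<and> (j \<notin> I \<longrightarrow> f j = 0)}"
      by (intro image_eqI[of _ _ "\<lambda>j. if j \<in> I then ys j else 0"]) auto
  qed
  moreover have "finite ?B" using \<open>finite I\<close> by auto
  ultimately show ?thesis
    using \<open>finite I\<close> by (elim finite_subset) (intro finite_imageI finite_set_of_finite_funs)
qed

lemma bij_betw_nested_range_remove_Min:
  assumes "m \<in> I" "\<And>j. j \<in> I \<Longrightarrow> m \<le> j"
  shows "bij_betw (\<lambda>(ys, a). ys(m := a))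
           (SIGMA ys:nested_range (I - {m}) g U. {ys (Suc m)..U m}) (nested_range I g U)"
proof -
  have Suc_ne: "Suc j \<noteq> m" if "j \<in> I" for j
    using assms(2)[OF that] by auto
  have restore: "ys = (ys(m := a))(m := g m)" if "ys \<in> nested_range (I - {m}) g U" for ys a
    using that unfolding nested_range_def by auto
  show ?thesis
  proof (rule bij_betwI')
    fix p q assume "p \<in> (SIGMA ys:nested_range (I - {m}) g U. {ys (Suc m)..U m})"
      "q \<in> (SIGMA ys:nested_range (I - {m}) g U. {ys (Suc m)..U m})"
    then obtain ys a ys' a' where pq: "p = (ys, a)" "q = (ys', a')"
      and ys: "ys \<in> nested_range (I - {m}) g U" "ys' \<in> nested_range (I - {m}) g U"
      by auto
    have "ys = ys' \<and> a = a'" if eq: "ys(m := a) = ys'(m := a')"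
      using restore[OF ys(1), of a] restore[OF ys(2), of a'] fun_cong[OF eq, of m] by (simp add: eq)
    then show "((\<lambda>(ys, a). ys(m := a)) p = (\<lambda>(ys, a). ys(m := a)) q) = (p = q)"
      using pq by auto
  next
    fix p assume "p \<in> (SIGMA ys:nested_range (I - {m}) g U. {ys (Suc m)..U m})"
    then show "(\<lambda>(ys, a). ys(m := a)) p \<in> nested_range I g U"
      using \<open>m \<in> I\<close> Suc_ne unfolding nested_range_def by auto
  next
    fix zs assume "zs \<in> nested_range I g U"
    then have "(zs(m := g m), zs m) \<in> (SIGMA ys:nested_range (I - {m}) g U. {ys (Suc m)..U m})"
      using \<open>m \<in> I\<close> Suc_ne unfolding nested_range_def by auto
    then show "\<exists>p\<in>(SIGMA ys:nested_range (I - {m}) g U. {ys (Suc m)..U m}).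
        zs = (\<lambda>(ys, a). ys(m := a)) p"
      by (intro bexI[of _ "(zs(m := g m), zs m)"]) auto
  qed
qed

lemma sum_nested_range_remove_Min:
  assumes "finite I" "\<And>j. 0 \<le> g j" "m \<in> I" "\<And>j. j \<in> I \<Longrightarrow> m \<le> j"
  shows "(\<Sum>zs\<in>nested_range I g U. G zs)
       = (\<Sum>ys\<in>nested_range (I - {m}) g U. \<Sum>a\<in>{ys (Suc m)..U m}. G (ys(m := a)))"
proof -
  have "(\<Sum>zs\<in>nested_range I g U. G zs)
      = (\<Sum>(ys, a)\<in>(SIGMA ys:nested_range (I - {m}) g U. {ys (Suc m)..U m}). G (ys(m := a)))"
    using sum.reindex_bij_betw[OF bij_betw_nested_range_remove_Min[OF assms(3,4)], of G, symmetric]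
    by (simp add: case_prod_beta')
  also have "\<dots> = (\<Sum>ys\<in>nested_range (I - {m}) g U. \<Sum>a\<in>{ys (Suc m)..U m}. G (ys(m := a)))"
    using finite_nested_range[of "I - {m}" g U] assms(1,2) by (subst sum.Sigma) auto
  finally show ?thesis .
qed

definition replace_col :: "nat \<Rightarrow> (nat \<Rightarrow> nat \<Rightarrow> 'a) \<Rightarrow> nat \<Rightarrow> (nat \<Rightarrow> 'a) \<Rightarrow> 'a mat" where
  "replace_col N h c v = mat N N (\<lambda>(i, j). if j = c then v i else h i j)"

lemma det_replace_col:
  fixes h :: "nat \<Rightarrow> nat \<Rightarrow> 'a::comm_ring_1"
  assumes "c < N"
  shows "det (replace_col N h c v) = (\<Sum>i<N. v i * cofactor (replace_col N h c (\<lambda>_. 0)) i c)"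
proof -
  have "cofactor (replace_col N h c v) i c = cofactor (replace_col N h c (\<lambda>_. 0)) i c" for i
  proof -
    have "mat_delete (replace_col N h c v) i c = mat_delete (replace_col N h c (\<lambda>_. 0)) i c"
      unfolding mat_delete_def replace_col_def by (rule eq_matI) auto
    then show ?thesis unfolding cofactor_def by simp
  qed
  then show ?thesis
    using laplace_expansion_column[of "replace_col N h c v" N c] assms
    by (simp add: replace_col_def)
qed

lemma det_replace_col_sum:
  fixes h :: "nat \<Rightarrow> nat \<Rightarrow> 'a::comm_ring_1"
  assumes "c < N"
  shows "det (replace_col N h c (\<lambda>i. \<Sum>a\<in>A. v a i)) = (\<Sum>a\<in>A. det (replace_col N h c (v a)))"
  unfolding det_replace_col[OF assms] by (simp add: sum_distrib_right sum.swap[of _ A])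

lemma det_replace_col_diff:
  fixes h :: "nat \<Rightarrow> nat \<Rightarrow> 'a::comm_ring_1"
  assumes "c < N"
  shows "det (replace_col N h c (\<lambda>i. v i - v' i)) = det (replace_col N h c v) - det (replace_col N h c v')"
  unfolding det_replace_col[OF assms] by (simp add: left_diff_distrib sum_subtractf)

lemma det_replace_col_eq_col:
  fixes h :: "nat \<Rightarrow> nat \<Rightarrow> 'a::comm_ring_1"
  assumes "c < N" "d < N" "d \<noteq> c" "\<And>i. i < N \<Longrightarrow> v i = h i d"
  shows "det (replace_col N h c v) = 0"
proof (rule det_identical_columns)
  show "col (replace_col N h c v) c = col (replace_col N h c v) d"
    using assms by (intro eq_vecI) (auto simp: replace_col_def)
qed (use assms in \<open>auto simp: replace_col_def\<close>)

(* e j a i is the entry in row i of column j when the summation variable y_(j+1) of that column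
   equals a: matrix indices start at 0, the variables y_1, ..., y_N at 1. *)
locale telescoping_columns =
  fixes N :: nat and e :: "nat \<Rightarrow> int \<Rightarrow> nat \<Rightarrow> 'a::comm_ring_1"
  assumes telescope: "\<And>j i b u. j < N \<Longrightarrow> 0 \<le> b \<Longrightarrow> b \<le> u + 1 \<Longrightarrow>
      (\<Sum>a\<in>{b..u}. e j a i) = e (Suc j) (u + 1) i - e (Suc j) b i"
    and vanish: "\<And>i. i < N \<Longrightarrow> e N 0 i = 0"
begin

(* The columns whose variable lies in K have already been summed over y_(j+1) = y_(j+2) .. U (j+1). *)
definition summed_mat :: "(nat \<Rightarrow> int) \<Rightarrow> nat set \<Rightarrow> (nat \<Rightarrow> int) \<Rightarrow> 'a mat" where
  "summed_mat U K ys = mat N N (\<lambda>(i, j).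
     if Suc j \<in> K then e (Suc j) (U (Suc j) + 1) i else e j (ys (Suc j)) i)"

lemma sum_det_summed_mat_col:
  assumes "1 \<le> m" "m \<le> N" "m \<notin> K" "Suc m \<notin> K"
    and "0 \<le> ys (Suc m)" "ys (Suc m) \<le> U m + 1" "m = N \<Longrightarrow> ys (Suc m) = 0"
  shows "(\<Sum>a\<in>{ys (Suc m)..U m}. det (summed_mat U K (ys(m := a))))
       = det (summed_mat U (insert m K) ys)"
proof -
  define c where "c = m - 1"
  have c: "Suc c = m" "c < N"
    using assms(1,2) unfolding c_def by auto
  define h where "h = (\<lambda>i j. if Suc j \<in> K then e (Suc j) (U (Suc j) + 1) i else e j (ys (Suc j)) i)"
  define b where "b = ys (Suc m)"
  have summed: "summed_mat U K (ys(m := a)) = replace_col N h c (e c a)" for a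
    unfolding summed_mat_def replace_col_def h_def by (rule eq_matI) (use c assms(3) in auto)
  have summed': "summed_mat U (insert m K) ys = replace_col N h c (e m (U m + 1))"
    unfolding summed_mat_def replace_col_def h_def by (rule eq_matI) (use c in auto)
  have "(\<Sum>a\<in>{b..U m}. det (summed_mat U K (ys(m := a))))
      = det (replace_col N h c (\<lambda>i. \<Sum>a\<in>{b..U m}. e c a i))"
    unfolding summed by (rule det_replace_col_sum[symmetric, OF c(2)])
  also have "\<dots> = det (replace_col N h c (\<lambda>i. e m (U m + 1) i - e m b i))"
    using telescope[OF c(2)] assms(5,6) unfolding b_def c(1) by simp
  also have "\<dots> = det (replace_col N h c (e m (U m + 1))) - det (replace_col N h c (e m b))"
    by (rule det_replace_col_diff[OF c(2)])
  also have "det (replace_col N h c (e m b)) = 0"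
  proof (cases "m = N")
    case True
    then show ?thesis
      using vanish assms(7) unfolding det_replace_col[OF c(2)] b_def by simp
  next
    case False
    show ?thesis
    proof (rule det_replace_col_eq_col[OF c(2)])
      show "m < N" "m \<noteq> c" using False assms(2) c(1) by auto
      show "e m b i = h i m" for i
        using assms(4) unfolding h_def b_def by simp
    qed
  qed
  finally show ?thesis
    unfolding summed' b_def by (simp only: diff_zero)
qed

context
  fixes K :: "nat set" and g U :: "nat \<Rightarrow> int"
  assumes K: "K \<subseteq> {1..N}" and g: "\<And>j. 0 \<le> g j" "g (Suc N) = 0"
    and U_antimono: "\<And>m. m \<in> K \<Longrightarrow> Suc m \<in> K \<Longrightarrow> U (Suc m) \<le> U m"
    and g_le_U: "\<And>m. m \<in> K \<Longrightarrow> Suc m \<notin> K \<Longrightarrow> g (Suc m) \<le> U m"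
begin

lemma sum_det_summed_mat_remove_Min:
  assumes "I \<subseteq> K" and I_closed: "\<And>j. j \<in> I \<Longrightarrow> Suc j \<in> K \<Longrightarrow> Suc j \<in> I"
    and m: "m \<in> I" "\<And>j. j \<in> I \<Longrightarrow> m \<le> j"
  shows "(\<Sum>ys\<in>nested_range I g U. det (summed_mat U (K - I) ys))
       = (\<Sum>ys\<in>nested_range (I - {m}) g U. det (summed_mat U (K - (I - {m})) ys))"
proof -
  have "finite I"
    using finite_subset[OF subset_trans[OF \<open>I \<subseteq> K\<close> K]] by simp
  have "1 \<le> m" "m \<le> N"
    using m(1) \<open>I \<subseteq> K\<close> K by auto
  have "(\<Sum>a\<in>{ys (Suc m)..U m}. det (summed_mat U (K - I) (ys(m := a))))
      = det (summed_mat U (K - (I - {m})) ys)" if ys: "ys \<in> nested_range (I - {m}) g U" for ys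
  proof -
    have "Suc m \<notin> K - I"
      using I_closed m(1) by auto
    moreover have "0 \<le> ys (Suc m)"
      using nested_range_nonneg[OF _ g(1) ys] \<open>finite I\<close> by simp
    moreover have "ys (Suc m) \<le> U m + 1"
    proof (cases "Suc m \<in> I")
      case True
      then have "ys (Suc m) \<le> U (Suc m)"
        using ys unfolding nested_range_def by simp
      moreover have "U (Suc m) \<le> U m"
        using U_antimono True m(1) \<open>I \<subseteq> K\<close> by blast
      ultimately show ?thesis by simp
    next
      case False
      then have "ys (Suc m) = g (Suc m)" "Suc m \<notin> K"
        using ys I_closed m(1) unfolding nested_range_def by auto
      moreover have "g (Suc m) \<le> U m"
        using g_le_U \<open>Suc m \<notin> K\<close> m(1) \<open>I \<subseteq> K\<close> by blast
      ultimately show ?thesis by simp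
    qed
    moreover have "ys (Suc m) = 0" if "m = N"
    proof -
      have "Suc m \<notin> I - {m}"
        using that \<open>I \<subseteq> K\<close> K by auto
      then show ?thesis
        using ys g(2) that unfolding nested_range_def by simp
    qed
    moreover have "insert m (K - I) = K - (I - {m})"
      using m(1) \<open>I \<subseteq> K\<close> by auto
    ultimately show ?thesis
      using sum_det_summed_mat_col[OF \<open>1 \<le> m\<close> \<open>m \<le> N\<close>, of "K - I" ys U] m(1) by simp
  qed
  then show ?thesis
    using sum_nested_range_remove_Min[where g = g and U = U
        and G = "\<lambda>ys. det (summed_mat U (K - I) ys)", OF \<open>finite I\<close> g(1) m] by simp
qed

(* I holds the variables not yet summed; closure under successors within K means that the sums
   are carried out from the innermost one outwards. *)
lemma sum_det_summed_mat:
  assumes "I \<subseteq> K" and "\<And>j. j \<in> I \<Longrightarrow> Suc j \<in> K \<Longrightarrow> Suc j \<in> I"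
  shows "(\<Sum>ys\<in>nested_range I g U. det (summed_mat U (K - I) ys)) = det (summed_mat U K g)"
proof -
  have "finite I"
    using finite_subset[OF subset_trans[OF \<open>I \<subseteq> K\<close> K]] by simp
  then show ?thesis
    using assms
  proof (induction I rule: finite_remove_induct)
    case empty
    then show ?case by simp
  next
    case (remove I)
    define m where "m = Min I"
    have m: "m \<in> I" "\<And>j. j \<in> I \<Longrightarrow> m \<le> j"
      using remove.hyps unfolding m_def by auto
    have "(\<Sum>ys\<in>nested_range (I - {m}) g U. det (summed_mat U (K - (I - {m})) ys))
        = det (summed_mat U K g)"
    proof (rule remove.IH[OF m(1)])
      show "I - {m} \<subseteq> K" using remove.prems(1) by auto
      show "Suc j \<in> I - {m}" if "j \<in> I - {m}" "Suc j \<in> K" for j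
        using that remove.prems(2) m(2)[of j] by auto
    qed
    then show ?case
      using sum_det_summed_mat_remove_Min[OF remove.prems m] by simp
  qed
qed

end

end

lemma telescoping_columns_circ_int:
  assumes "0 < R" and F: "F analytic_on {w. R \<le> cmod w}" and lim: "(F \<longlongrightarrow> 0) at_infinity"
  shows "telescoping_columns N
           (\<lambda>j a i. circ_int R (\<lambda>w. (w + 1) powi a * w powi (int i - int j) * F w))"
proof
  have F_cont: "continuous_on (sphere 0 R) F"
    using holomorphic_on_imp_continuous_on[OF analytic_imp_holomorphic[OF F]]
    by (rule continuous_on_subset) auto
  fix j i :: nat and b u :: int assume "0 \<le> b" "b \<le> u + 1"
  moreover have "int i - int (Suc j) = int i - int j - 1" by simp
  ultimately show "(\<Sum>a\<in>{b..u}. circ_int R (\<lambda>w. (w + 1) powi a * w powi (int i - int j) * F w))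
      = circ_int R (\<lambda>w. (w + 1) powi (u + 1) * w powi (int i - int (Suc j)) * F w)
        - circ_int R (\<lambda>w. (w + 1) powi b * w powi (int i - int (Suc j)) * F w)"
    using circ_int_sum_telescope[OF F_cont \<open>0 < R\<close>] by presburger
next
  fix i assume "i < N"
  then show "circ_int R (\<lambda>w. (w + 1) powi 0 * w powi (int i - int N) * F w) = 0"
    using circ_int_power_int_eq_0[OF F \<open>0 < R\<close> lim, of "int i - int N"] by simp
qed

theorem mainTheorem9:
  fixes N n :: nat and x y :: int and xs :: "nat \<Rightarrow> int" and R :: real
    and F :: "complex \<Rightarrow> complex"
  assumes "N \<ge> 1" and "1 \<le> n" and "n \<le> N"
    and "0 \<le> xs 1" and "\<And>j. 1 \<le> j \<Longrightarrow> j < N \<Longrightarrow> xs j \<le> xs (Suc j)"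
    and "xs N \<le> x + y" and "xs n = x"
    and "R > 0" and "F analytic_on {w. R \<le> cmod w}"
    and "(F \<longlongrightarrow> 0) at_infinity"
  shows "(\<Sum>ys\<in>sum_range N n xs x y.
            det (mat N N (\<lambda>(i, j). circ_int R (\<lambda>w. (w + 1) powi (ys (Suc j)) *
                 w powi (int i - int j) * F w))))
       = det (mat N N (\<lambda>(i, j). circ_int R (\<lambda>w.
                 (w + 1) powi (x + y - xs (Suc j) + (if Suc j \<noteq> n then 1 else 0)) *
                 w powi (int i - int j - (if Suc j \<noteq> n then 1 else 0)) * F w)))"
proof -
  interpret telescoping_columns N
    "\<lambda>j a i. circ_int R (\<lambda>w. (w + 1) powi a * w powi (int i - int j) * F w)"
    using assms(8-10) by (rule telescoping_columns_circ_int)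
  define g where "g = (\<lambda>j. if j = n then y else 0)"
  define U where "U = (\<lambda>j. x + y - xs j)"
  define K where "K = {1..N} - {n}"
  have "xs n \<le> xs N"
    using lift_Suc_mono_le_ivl[where N = "{1..<N}" and f = xs] assms(2,3,5) by auto
  then have "0 \<le> y"
    using assms(6,7) by simp
  have "g (Suc m) \<le> U m" if "m \<in> K" "Suc m \<notin> K" for m
    using that assms(3,5,6,7) unfolding K_def g_def U_def by (cases "m = N") auto
  then have "(\<Sum>ys\<in>nested_range K g U. det (summed_mat U {} ys)) = det (summed_mat U K g)"
    using sum_det_summed_mat[of K g U K] \<open>0 \<le> y\<close> assms(3,5) by (auto simp: K_def g_def U_def)
  moreover have "sum_range N n xs x y = nested_range K g U"
    unfolding sum_range_def nested_range_def K_def g_def U_def using assms(2,3) by auto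
  moreover have "summed_mat U K g = mat N N (\<lambda>(i, j). circ_int R (\<lambda>w.
      (w + 1) powi (x + y - xs (Suc j) + (if Suc j \<noteq> n then 1 else 0)) *
      w powi (int i - int j - (if Suc j \<noteq> n then 1 else 0)) * F w))"
    unfolding summed_mat_def
    by (rule eq_matI) (use assms(7) in \<open>auto simp: K_def U_def g_def algebra_simps\<close>)
  ultimately show ?thesis
    unfolding summed_mat_def by simp
qed

end
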